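(* Let $G$ be a finite induced regular group with $[G:Z(G)]=p^q$, where $p$ and $q$ are primes. Then $G/Z(G)$ is an elementary $p$-group. Moreover, for each $x\in G\setminus Z(G)$, $|\beta_G(x)|=(p-1)|Z(G)|$.
   Context: For a finite group $G$, $C_G(x)$ denotes the centralizer of $x\in G$ and $Z(G)$ the center; $\beta_G(x)=\{y\in G\mid C_G(y)=C_G(x)\}$. The non-centralizer graph $\Upsilon_G$ is the simple graph with vertex set $G$ in which two distinct vertices $x,y$ are adjacent iff $C_G(x)\neq C_G(y)$; the induced non-centralizer graph $\Upsilon_{G\setminus Z(G)}$ is its induced subgraph on $G\setminus Z(G)$. $G$ is called induced regular if $\Upsilon_{G\setminus Z(G)}$ is a regular graph. A group is called an elementary $p$-group if every non-identity element has order exactly $p$ (it need not be abelian). *)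

theory Defs
  imports "HOL-Algebra.Algebra"
begin

definition centralizer :: "('a, 'b) monoid_scheme \<Rightarrow> 'a \<Rightarrow> 'a set" where
  "centralizer G x = {y \<in> carrier G. x \<otimes>\<^bsub>G\<^esub> y = y \<otimes>\<^bsub>G\<^esub> x}"

definition center :: "('a, 'b) monoid_scheme \<Rightarrow> 'a set" where
  "center G = {z \<in> carrier G. \<forall>y \<in> carrier G. z \<otimes>\<^bsub>G\<^esub> y = y \<otimes>\<^bsub>G\<^esub> z}"

definition beta :: "('a, 'b) monoid_scheme \<Rightarrow> 'a \<Rightarrow> 'a set" where
  "beta G x = {y \<in> carrier G. centralizer G y = centralizer G x}"

definition nc_adj :: "('a, 'b) monoid_scheme \<Rightarrow> 'a \<Rightarrow> 'a \<Rightarrow> bool" where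
  "nc_adj G x y \<longleftrightarrow> x \<noteq> y \<and> centralizer G x \<noteq> centralizer G y"

definition induced_nc_degree :: "('a, 'b) monoid_scheme \<Rightarrow> 'a \<Rightarrow> nat" where
  "induced_nc_degree G x = card {y \<in> carrier G - center G. nc_adj G x y}"

definition induced_regular :: "('a, 'b) monoid_scheme \<Rightarrow> bool" where
  "induced_regular G \<longleftrightarrow>
     (\<forall>x \<in> carrier G - center G. \<forall>y \<in> carrier G - center G.
        induced_nc_degree G x = induced_nc_degree G y)"

definition elementary_p_group :: "('a, 'b) monoid_scheme \<Rightarrow> nat \<Rightarrow> bool" where
  "elementary_p_group H p \<longleftrightarrow>
     (\<forall>x \<in> carrier H. x \<noteq> \<one>\<^bsub>H\<^esub> \<longrightarrow> group.ord H x = p)"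

end

theory Submission
  imports Defs "HOL-Number_Theory.Totient"
begin

text \<open>Distinct centralizers partition \<open>G - Z(G)\<close> into the classes \<open>\<beta>(x)\<close>, each a union of
  \<open>c(x)\<close> cosets of \<open>Z(G)\<close>. The degree of \<open>x\<close> in the induced graph is \<open>|G - Z(G)| - |\<beta>(x)|\<close>,
  so induced regularity makes \<open>c(x) = c\<close> constant. If \<open>C(x)\<close> has maximal size, then
  \<open>\<beta>(x) \<union> Z(G) = C(C(x))\<close> is a proper subgroup, so \<open>c + 1 = p\<^sup>b\<close> with \<open>0 < b < q\<close>; counting
  classes, \<open>p\<^sup>b - 1\<close> divides \<open>p\<^sup>q - 1\<close>, hence \<open>b\<close> divides \<open>q\<close> and \<open>b = 1\<close>. Finally, if \<open>Z(G) x\<close>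
  has order \<open>n\<close> in \<open>G/Z(G)\<close>, every \<open>x\<^sup>i\<close> with \<open>i\<close> coprime to \<open>n\<close> has the same centralizer as \<open>x\<close>,
  giving \<open>\<phi>(n)\<close> distinct cosets in \<open>\<beta>(x)\<close>; as \<open>n\<close> is a power of \<open>p\<close>, \<open>\<phi>(n) \<le> p - 1\<close> forces \<open>n = p\<close>.\<close>

lemma power_minus_one_dvd_imp_dvd:
  fixes p b n :: nat
  assumes p: "1 < p" and "(p ^ b - 1) dvd (p ^ n - 1)"
  shows "b dvd n"
  using assms(2)
proof (induction n rule: less_induct)
  case (less n)
  show ?case
  proof (cases "b = 0 \<or> n < b")
    case True
    then have "p ^ n - 1 < p ^ b - 1 \<or> b = 0"
      using p by (auto intro: diff_less_mono)
    then have "p ^ n - 1 = 0"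
      using less.prems by (auto dest: dvd_imp_le)
    then have "n = 0"
      using p by (simp add: le_Suc_eq)
    then show ?thesis by simp
  next
    case False
    define A where "A = p ^ (n - b)"
    have "A \<ge> 1" "p ^ b \<ge> 1"
      using p by (simp_all add: A_def)
    moreover have "p ^ n = A * p ^ b"
      using False by (simp add: A_def power_add[symmetric])
    ultimately have "p ^ n - 1 = A * (p ^ b - 1) + (A - 1)"
      by (simp add: algebra_simps)
    then have "(p ^ b - 1) dvd (p ^ (n - b) - 1)"
      using less.prems by (simp add: A_def dvd_add_right_iff)
    then have "b dvd (n - b)"
      using less.IH False by simp
    then show ?thesis
      using False by (metis dvd_add_right_iff dvd_refl le_add_diff_inverse not_less)
  qed
qed

lemma eq_pred_prime_if_dvd_prime_power:
  fixes p q c :: nat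
  assumes p: "Factorial_Ring.prime p" and q: "Factorial_Ring.prime q"
    and "Suc c dvd p ^ q" and "Suc c < p ^ q" and "c dvd p ^ q - 1"
  shows "c = p - 1"
proof -
  obtain b where b: "b \<le> q" "Suc c = p ^ b"
    using assms(3) divides_primepow_nat[OF p] by blast
  then have "b dvd q"
    using assms(5) power_minus_one_dvd_imp_dvd[OF prime_gt_1_nat[OF p]] by (metis diff_Suc_1)
  moreover have "b \<noteq> q"
    using b(2) assms(4) by (metis less_not_refl)
  ultimately have "b = 1"
    using q prime_nat_iff by blast
  then show ?thesis
    using b(2) by simp
qed

lemma eq_prime_if_totient_le:
  fixes p k n :: nat
  assumes p: "Factorial_Ring.prime p" and "n dvd p ^ k" and "n \<noteq> 1" and "totient n \<le> p - 1"
  shows "n = p"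
proof -
  obtain a where a: "n = p ^ a"
    using assms(2) divides_primepow_nat[OF p] by blast
  with assms(3) have "a > 0" by (cases a) auto
  then have "p ^ (a - 1) * (p - 1) \<le> 1 * (p - 1)"
    using assms(4) totient_prime_power[OF p] a by simp
  then have "p ^ (a - 1) \<le> 1"
    using prime_gt_1_nat[OF p] by (subst (asm) mult_le_cancel2) simp
  then have "a - 1 = 0"
    using prime_gt_1_nat[OF p] by (meson not_gr0 not_le one_less_power)
  then have "a = 1"
    using \<open>a > 0\<close> by simp
  then show ?thesis
    using a by simp
qed

definition commutant :: "('a, 'b) monoid_scheme \<Rightarrow> 'a set \<Rightarrow> 'a set" where
  "commutant G S = {y \<in> carrier G. \<forall>s \<in> S. s \<otimes>\<^bsub>G\<^esub> y = y \<otimes>\<^bsub>G\<^esub> s}"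

definition beta_cosets :: "('a, 'b) monoid_scheme \<Rightarrow> 'a \<Rightarrow> 'a set set" where
  "beta_cosets G x = (\<lambda>y. center G #>\<^bsub>G\<^esub> y) ` beta G x"

lemma center_eq_commutant: "center G = commutant G (carrier G)"
  by (auto simp: center_def commutant_def)

lemma centralizer_subset_carrier: "centralizer G x \<subseteq> carrier G"
  by (auto simp: centralizer_def)

lemma center_iff_centralizer_eq_carrier:
  "x \<in> carrier G \<Longrightarrow> x \<in> center G \<longleftrightarrow> centralizer G x = carrier G"
  by (auto simp: center_def centralizer_def)

lemma beta_subset_noncentral:
  assumes "x \<in> carrier G - center G"
  shows "beta G x \<subseteq> carrier G - center G"
proof
  fix y assume "y \<in> beta G x"
  then have "y \<in> carrier G" and "centralizer G y = centralizer G x"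
    by (auto simp: beta_def)
  with assms show "y \<in> carrier G - center G"
    using center_iff_centralizer_eq_carrier[of x G] center_iff_centralizer_eq_carrier[of y G]
    by blast
qed

lemma mem_beta_self: "x \<in> carrier G \<Longrightarrow> x \<in> beta G x"
  by (simp add: beta_def)

lemma beta_disjoint:
  assumes "beta G x \<noteq> beta G y"
  shows "beta G x \<inter> beta G y = {}"
proof (rule ccontr)
  assume "beta G x \<inter> beta G y \<noteq> {}"
  then obtain z where "z \<in> beta G x" and "z \<in> beta G y"
    by blast
  then have "centralizer G x = centralizer G y"
    by (simp add: beta_def)
  with assms show False
    by (simp add: beta_def)
qed

lemma finite_beta: "finite (carrier G) \<Longrightarrow> finite (beta G x)"
  by (rule rev_finite_subset) (auto simp: beta_def)

lemma induced_nc_degree_eq: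
  assumes "finite (carrier G)" and "x \<in> carrier G - center G"
  shows "induced_nc_degree G x = card (carrier G - center G) - card (beta G x)"
proof -
  have "finite (beta G x)"
    using assms(1) by (rule finite_beta)
  moreover have "{y \<in> carrier G - center G. nc_adj G x y} = (carrier G - center G) - beta G x"
    by (auto simp: nc_adj_def beta_def)
  ultimately show ?thesis
    unfolding induced_nc_degree_def
    using card_Diff_subset beta_subset_noncentral[OF assms(2)] by simp
qed

lemma induced_regular_card_beta_eq:
  assumes "finite (carrier G)" and "induced_regular G"
    and x: "x \<in> carrier G - center G" and y: "y \<in> carrier G - center G"
  shows "card (beta G x) = card (beta G y)"
proof -
  have le: "card (beta G z) \<le> card (carrier G - center G)" if "z \<in> carrier G - center G" for z
    using card_mono[OF _ beta_subset_noncentral[OF that]] assms(1) by simp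
  have "induced_nc_degree G x = induced_nc_degree G y"
    using assms(2) x y unfolding induced_regular_def by blast
  then show ?thesis
    using induced_nc_degree_eq[OF assms(1) x] induced_nc_degree_eq[OF assms(1) y] le[OF x] le[OF y]
    by linarith
qed

lemma card_beta_dvd_card_noncentral:
  assumes fin: "finite (carrier G)"
    and eq: "\<And>x y. x \<in> carrier G - center G \<Longrightarrow> y \<in> carrier G - center G \<Longrightarrow>
               card (beta G x) = card (beta G y)"
    and x: "x \<in> carrier G - center G"
  shows "card (beta G x) dvd card (carrier G - center G)"
proof -
  let ?P = "beta G ` (carrier G - center G)"
  have "\<Union>?P = carrier G - center G"
  proof
    show "\<Union>?P \<subseteq> carrier G - center G"
      using beta_subset_noncentral by (rule UN_least)
    show "carrier G - center G \<subseteq> \<Union>?P"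
    proof
      fix y assume "y \<in> carrier G - center G"
      then show "y \<in> \<Union>?P"
        using mem_beta_self[of y G] by blast
    qed
  qed
  moreover have "card (beta G x) * card ?P = card (\<Union>?P)"
  proof (rule card_partition)
    show "finite ?P" "finite (\<Union>?P)"
      using fin calculation by simp_all
    show "card c = card (beta G x)" if "c \<in> ?P" for c
      using that eq x by blast
    show "c1 \<inter> c2 = {}" if c1: "c1 \<in> ?P" and c2: "c2 \<in> ?P" and "c1 \<noteq> c2" for c1 c2
    proof -
      obtain a b where "c1 = beta G a" and "c2 = beta G b"
        using c1 c2 by (auto simp only: image_iff)
      with \<open>c1 \<noteq> c2\<close> show ?thesis
        using beta_disjoint by simp
    qed
  qed
  ultimately show ?thesis by (metis dvd_triv_left)
qed

lemma (in normal) FactGroup_nat_pow: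
  assumes "x \<in> carrier G"
  shows "(H #> x) [^]\<^bsub>G Mod H\<^esub> (n::nat) = H #> (x [^] n)"
  using hom_nat_pow[OF r_coset_hom_Mod assms is_group factorgroup_is_group] by simp

context group
begin

lemma commute_inv:
  assumes "a \<in> carrier G" and "s \<in> carrier G" and "s \<otimes> a = a \<otimes> s"
  shows "s \<otimes> inv a = inv a \<otimes> s"
proof -
  have "s \<otimes> inv a = inv a \<otimes> (a \<otimes> s) \<otimes> inv a"
    using assms(1,2) by (simp add: m_assoc[symmetric])
  also have "\<dots> = inv a \<otimes> (s \<otimes> a) \<otimes> inv a"
    using assms(3) by simp
  also have "\<dots> = inv a \<otimes> s"
    using assms(1,2) by (simp add: m_assoc)
  finally show ?thesis .
qed

lemma subgroup_commutant:
  assumes "S \<subseteq> carrier G"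
  shows "subgroup (commutant G S) G"
proof (rule subgroupI)
  have "\<one> \<in> commutant G S"
    using assms by (auto simp: commutant_def)
  then show "commutant G S \<noteq> {}" by blast
  show "inv a \<in> commutant G S" if "a \<in> commutant G S" for a
    using that assms commute_inv by (auto simp: commutant_def)
  show "a \<otimes> b \<in> commutant G S" if a: "a \<in> commutant G S" and b: "b \<in> commutant G S" for a b
  proof -
    have "s \<otimes> (a \<otimes> b) = a \<otimes> b \<otimes> s" if "s \<in> S" for s
    proof -
      have s: "s \<in> carrier G" and sa: "s \<otimes> a = a \<otimes> s" and sb: "s \<otimes> b = b \<otimes> s"
        and ab: "a \<in> carrier G" "b \<in> carrier G"
        using that a b assms by (auto simp: commutant_def)
      have "s \<otimes> (a \<otimes> b) = a \<otimes> (s \<otimes> b)"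
        using s ab sa by (simp add: m_assoc[symmetric])
      also have "\<dots> = a \<otimes> b \<otimes> s"
        using s ab sb by (simp add: m_assoc)
      finally show ?thesis .
    qed
    then show ?thesis
      using a b by (auto simp: commutant_def)
  qed
qed (auto simp: commutant_def)

lemma subgroup_center: "subgroup (center G) G"
  unfolding center_eq_commutant by (rule subgroup_commutant) simp

lemma normal_center: "center G \<lhd> G"
  using subgroup_center by (rule normalI) (auto simp: r_coset_def l_coset_def center_def)

lemma centralizer_mult_center:
  assumes z: "z \<in> center G" and x: "x \<in> carrier G"
  shows "centralizer G (z \<otimes> x) = centralizer G x"
proof -
  have zc: "z \<in> carrier G" and zy: "\<And>y. y \<in> carrier G \<Longrightarrow> z \<otimes> y = y \<otimes> z"
    using z by (auto simp: center_def)
  have "z \<otimes> x \<otimes> y = y \<otimes> (z \<otimes> x) \<longleftrightarrow> x \<otimes> y = y \<otimes> x" if y: "y \<in> carrier G" for y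
  proof -
    have "y \<otimes> (z \<otimes> x) = z \<otimes> (y \<otimes> x)"
      using x y zc zy[OF y] by (simp add: m_assoc[symmetric])
    then show ?thesis
      using x y zc by (simp add: m_assoc)
  qed
  then show ?thesis
    by (auto simp: centralizer_def)
qed

lemma centralizer_subset_centralizer_pow:
  "x \<in> carrier G \<Longrightarrow> centralizer G x \<subseteq> centralizer G (x [^] (n::nat))"
  using group_commutes_pow by (auto simp: centralizer_def)

lemma centralizer_coprime_pow:
  fixes i n :: nat
  assumes x: "x \<in> carrier G" and central: "x [^] n \<in> center G" and "coprime i n" and "i > 0"
  shows "centralizer G (x [^] i) = centralizer G x"
proof -
  obtain j k where jk: "i * j = n * k + 1"
    using bezout_nat[of i n] \<open>coprime i n\<close> \<open>i > 0\<close> by auto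
  have "(x [^] i) [^] j = (x [^] n) [^] k \<otimes> x"
    using x by (simp add: nat_pow_pow jk nat_pow_mult[symmetric])
  moreover have "(x [^] n) [^] k \<in> center G"
    using subgroup_int_pow_closed[OF subgroup_center central, of "int k"] by (simp add: int_pow_int)
  ultimately have "centralizer G ((x [^] i) [^] j) = centralizer G x"
    using centralizer_mult_center x by simp
  moreover have "centralizer G x \<subseteq> centralizer G (x [^] i)"
    using x by (rule centralizer_subset_centralizer_pow)
  moreover have "centralizer G (x [^] i) \<subseteq> centralizer G ((x [^] i) [^] j)"
    using x by (intro centralizer_subset_centralizer_pow) simp
  ultimately show ?thesis
    by blast
qed

lemma center_rcos_subset_beta:
  assumes "y \<in> beta G x"
  shows "center G #> y \<subseteq> beta G x"
proof
  fix w assume "w \<in> center G #> y"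
  then obtain z where z: "z \<in> center G" and w: "w = z \<otimes> y"
    by (auto simp: r_coset_def)
  have y: "y \<in> carrier G" and "centralizer G y = centralizer G x"
    using assms by (auto simp: beta_def)
  moreover have "w \<in> carrier G"
    using w z y subgroup.subset[OF subgroup_center] by auto
  ultimately show "w \<in> beta G x"
    using centralizer_mult_center[OF z y] w by (simp add: beta_def)
qed

lemma card_beta:
  assumes fin: "finite (carrier G)"
  shows "card (beta G x) = card (beta_cosets G x) * card (center G)"
proof -
  have B: "beta G x \<subseteq> carrier G"
    by (auto simp: beta_def)
  have rcosets: "beta_cosets G x \<subseteq> rcosets (center G)"
    using B by (auto simp: beta_cosets_def RCOSETS_def)
  have "\<Union>(beta_cosets G x) = beta G x"
  proof
    show "\<Union>(beta_cosets G x) \<subseteq> beta G x"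
      unfolding beta_cosets_def using center_rcos_subset_beta by (rule UN_least)
    show "beta G x \<subseteq> \<Union>(beta_cosets G x)"
    proof
      fix y assume y: "y \<in> beta G x"
      then have "y \<in> center G #> y"
        using B rcos_self[OF _ subgroup_center] by auto
      then show "y \<in> \<Union>(beta_cosets G x)"
        using y by (auto simp: beta_cosets_def)
    qed
  qed
  moreover have "card (center G) * card (beta_cosets G x) = card (\<Union>(beta_cosets G x))"
  proof (rule card_partition)
    show "finite (beta_cosets G x)"
      unfolding beta_cosets_def using finite_beta[OF fin] by (rule finite_imageI)
    show "finite (\<Union>(beta_cosets G x))"
      using finite_beta[OF fin] calculation by simp
    show "card c = card (center G)" if "c \<in> beta_cosets G x" for c
      using card_rcosets_equal[of c "center G"] rcosets that subgroup.subset[OF subgroup_center]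
      by auto
    show "c1 \<inter> c2 = {}"
      if "c1 \<in> beta_cosets G x" and "c2 \<in> beta_cosets G x" and "c1 \<noteq> c2" for c1 c2
      using pairwiseD[OF rcos_disjoint[OF subgroup_center]] that rcosets
      by (auto simp: disjnt_def)
  qed
  ultimately show ?thesis
    by (simp only: mult.commute[of "card (center G)"])
qed

lemma mem_commutant_centralizer_iff:
  assumes "y \<in> carrier G"
  shows "y \<in> commutant G (centralizer G x) \<longleftrightarrow> centralizer G x \<subseteq> centralizer G y"
  using assms by (auto simp: commutant_def centralizer_def)

lemma beta_un_center_subset_commutant_centralizer:
  "beta G x \<union> center G \<subseteq> commutant G (centralizer G x)"
proof
  fix y assume y: "y \<in> beta G x \<union> center G"
  then have "y \<in> carrier G"
    by (auto simp: beta_def center_def)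
  moreover have "centralizer G x \<subseteq> centralizer G y"
    using y center_iff_centralizer_eq_carrier[OF \<open>y \<in> carrier G\<close>] centralizer_subset_carrier[of G x]
    by (auto simp: beta_def)
  ultimately show "y \<in> commutant G (centralizer G x)"
    by (simp add: mem_commutant_centralizer_iff)
qed

lemma beta_un_center_eq_commutant_centralizer:
  assumes fin: "finite (carrier G)"
    and max: "\<And>y. y \<in> carrier G - center G \<Longrightarrow> card (centralizer G y) \<le> card (centralizer G x)"
  shows "beta G x \<union> center G = commutant G (centralizer G x)"
proof
  show "commutant G (centralizer G x) \<subseteq> beta G x \<union> center G"
  proof
    fix y assume "y \<in> commutant G (centralizer G x)"
    then have y: "y \<in> carrier G" and sub: "centralizer G x \<subseteq> centralizer G y"
      using mem_commutant_centralizer_iff by (auto simp: commutant_def)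
    have "centralizer G x = centralizer G y" if "y \<notin> center G"
      using card_seteq[OF rev_finite_subset[OF fin centralizer_subset_carrier] sub] max y that
      by blast
    then show "y \<in> beta G x \<union> center G"
      using y by (auto simp: beta_def)
  qed
qed (rule beta_un_center_subset_commutant_centralizer)

lemma ex_subgroup_beta_un_center:
  assumes fin: "finite (carrier G)" and "center G \<noteq> carrier G"
  obtains x where "x \<in> carrier G - center G" and "subgroup (beta G x \<union> center G) G"
proof -
  let ?f = "\<lambda>y. card (centralizer G y)"
  obtain x0 where x0: "x0 \<in> carrier G - center G"
    using assms(2) subgroup.subset[OF subgroup_center] by blast
  have "\<forall>y. y \<in> carrier G - center G \<longrightarrow> ?f y < Suc (card (carrier G))"
    using card_mono[OF fin centralizer_subset_carrier] by (simp add: le_imp_less_Suc)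
  from Lattices_Big.ex_has_greatest_nat[OF x0 this]
  obtain x where x: "x \<in> carrier G - center G"
    and max: "\<forall>y. y \<in> carrier G - center G \<longrightarrow> ?f y \<le> ?f x"
    by (elim exE conjE)
  have "beta G x \<union> center G = commutant G (centralizer G x)"
    using max by (intro beta_un_center_eq_commutant_centralizer[OF fin]) simp
  then have "subgroup (beta G x \<union> center G) G"
    using subgroup_commutant[OF centralizer_subset_carrier] by simp
  with x show thesis
    by (rule that)
qed

lemma beta_un_center_psubset_carrier:
  assumes x: "x \<in> carrier G - center G"
  shows "beta G x \<union> center G \<subset> carrier G"
proof -
  have "x \<in> centralizer G x"
    using x by (simp add: centralizer_def)
  then have "beta G x \<union> center G \<subseteq> centralizer G x"
    using beta_un_center_subset_commutant_centralizer
    by (auto simp: commutant_def centralizer_def)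
  moreover have "centralizer G x \<noteq> carrier G"
    using x center_iff_centralizer_eq_carrier[of x G] by blast
  ultimately show ?thesis
    using centralizer_subset_carrier[of G x] by blast
qed

lemma finite_center:
  assumes "finite (carrier G)"
  shows "finite (center G)"
  using assms subgroup.subset[OF subgroup_center] by (rule rev_finite_subset)

lemma card_center_gt_0: "finite (carrier G) \<Longrightarrow> card (center G) > 0"
  using subgroup.one_closed[OF subgroup_center] finite_center
  by (auto simp: card_gt_0_iff)

lemma ex_noncentral_Suc_card_beta_cosets_dvd_index:
  assumes fin: "finite (carrier G)" and "center G \<noteq> carrier G"
  obtains x where "x \<in> carrier G - center G"
    and "Suc (card (beta_cosets G x)) dvd card (rcosets (center G))"
    and "Suc (card (beta_cosets G x)) < card (rcosets (center G))"
proof -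
  obtain x where x: "x \<in> carrier G - center G" and H: "subgroup (beta G x \<union> center G) G"
    using ex_subgroup_beta_un_center[OF assms] .
  let ?c = "card (beta_cosets G x)" and ?z = "card (center G)" and ?i = "card (rcosets (center G))"
  have order: "order G = ?i * ?z"
    using lagrange[OF subgroup_center] by simp
  have "card (beta G x \<union> center G) = card (beta G x) + ?z"
    using finite_beta[OF fin] finite_center[OF fin] beta_subset_noncentral[OF x]
    by (subst card_Un_disjoint) auto
  then have H_card: "card (beta G x \<union> center G) = Suc ?c * ?z"
    using card_beta[OF fin] by simp
  have "Suc ?c * ?z dvd ?i * ?z"
    using lagrange[OF H] order H_card by (metis dvd_triv_right)
  then have "Suc ?c dvd ?i"
    using card_center_gt_0[OF fin] by (simp only: dvd_times_right_cancel_iff neq0_conv)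
  have "Suc ?c * ?z < ?i * ?z"
    using psubset_card_mono[OF fin beta_un_center_psubset_carrier[OF x]] order H_card
    by (simp add: order_def)
  then have "Suc ?c < ?i"
    by (simp only: mult_less_cancel2)
  with \<open>Suc ?c dvd ?i\<close> show thesis
    by (rule that[OF x])
qed

lemma card_noncentral:
  assumes fin: "finite (carrier G)"
  shows "card (carrier G - center G) = (card (rcosets (center G)) - 1) * card (center G)"
proof -
  have "card (carrier G - center G) = order G - card (center G)"
    unfolding order_def
    using card_Diff_subset[OF finite_center[OF fin] subgroup.subset[OF subgroup_center]] .
  also have "\<dots> = (card (rcosets (center G)) - 1) * card (center G)"
    unfolding lagrange[OF subgroup_center, symmetric] diff_mult_distrib by simp
  finally show ?thesis .
qed

lemma card_beta_cosets_dvd_pred_index: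
  assumes fin: "finite (carrier G)" and reg: "induced_regular G" and x: "x \<in> carrier G - center G"
  shows "card (beta_cosets G x) dvd card (rcosets (center G)) - 1"
proof -
  have "card (beta G x) dvd card (carrier G - center G)"
    using card_beta_dvd_card_noncentral[OF fin induced_regular_card_beta_eq[OF fin reg] x] .
  then have "card (beta_cosets G x) * card (center G)
      dvd (card (rcosets (center G)) - 1) * card (center G)"
    unfolding card_noncentral[OF fin] card_beta[OF fin] .
  then show ?thesis
    using card_center_gt_0[OF fin] by (simp only: dvd_times_right_cancel_iff neq0_conv)
qed

lemma card_beta_cosets_eq_pred_prime:
  assumes fin: "finite (carrier G)" and reg: "induced_regular G"
    and p: "Factorial_Ring.prime p" and q: "Factorial_Ring.prime q"
    and index: "card (rcosets (center G)) = p ^ q"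
    and x: "x \<in> carrier G - center G"
  shows "card (beta_cosets G x) = p - 1"
proof -
  have "center G \<noteq> carrier G"
    using x by blast
  obtain x0 where x0: "x0 \<in> carrier G - center G"
    and "Suc (card (beta_cosets G x0)) dvd p ^ q" and "Suc (card (beta_cosets G x0)) < p ^ q"
    using ex_noncentral_Suc_card_beta_cosets_dvd_index[OF fin \<open>center G \<noteq> carrier G\<close>]
    unfolding index .
  moreover have "card (beta_cosets G x0) dvd p ^ q - 1"
    using card_beta_cosets_dvd_pred_index[OF fin reg x0] unfolding index .
  ultimately have "card (beta_cosets G x0) = p - 1"
    by (intro eq_pred_prime_if_dvd_prime_power[OF p q])
  moreover have "card (beta_cosets G x) * card (center G) = card (beta_cosets G x0) * card (center G)"
    using induced_regular_card_beta_eq[OF fin reg x x0] unfolding card_beta[OF fin] .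
  ultimately show ?thesis
    using card_center_gt_0[OF fin] by simp
qed

lemma card_pow_totatives_ord:
  assumes "a \<in> carrier G"
  shows "card ((\<lambda>i. a [^] i) ` totatives (ord a)) = totient (ord a)"
  unfolding totient_def
proof (rule card_image)
  show "inj_on (\<lambda>i. a [^] i) (totatives (ord a))"
    by (rule inj_on_subset[OF ord_inj'[OF assms]]) (auto simp: totatives_def)
qed

lemma totient_ord_le_card_beta_cosets:
  assumes fin: "finite (carrier G)" and x: "x \<in> carrier G"
  shows "totient (group.ord (G Mod center G) (center G #> x)) \<le> card (beta_cosets G x)"
proof -
  interpret Q: group "G Mod center G"
    by (rule normal.factorgroup_is_group[OF normal_center])
  let ?X = "center G #> x"
  let ?n = "Q.ord ?X"
  have X: "?X \<in> carrier (G Mod center G)"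
    using x by (auto simp: carrier_FactGroup)
  have pow: "?X [^]\<^bsub>G Mod center G\<^esub> k = center G #> x [^] k" for k :: nat
    using normal.FactGroup_nat_pow[OF normal_center x] .
  have "center G #> x [^] ?n = center G"
    using Q.pow_ord_eq_1[OF X] unfolding pow by simp
  then have central: "x [^] ?n \<in> center G"
    using coset_join1[OF _ _ subgroup_center] x by simp
  have "(\<lambda>i. ?X [^]\<^bsub>G Mod center G\<^esub> i) ` totatives ?n \<subseteq> beta_cosets G x"
  proof
    fix C assume "C \<in> (\<lambda>i. ?X [^]\<^bsub>G Mod center G\<^esub> i) ` totatives ?n"
    then obtain i where i: "i \<in> totatives ?n" and C: "C = center G #> x [^] i"
      unfolding pow by blast
    have "centralizer G (x [^] i) = centralizer G x"
      using i by (intro centralizer_coprime_pow[OF x central]) (simp_all add: totatives_def)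
    then have "x [^] i \<in> beta G x"
      using x by (simp add: beta_def)
    then show "C \<in> beta_cosets G x"
      unfolding C beta_cosets_def by (rule imageI)
  qed
  then have "card ((\<lambda>i. ?X [^]\<^bsub>G Mod center G\<^esub> i) ` totatives ?n) \<le> card (beta_cosets G x)"
    by (rule card_mono[rotated]) (simp add: beta_cosets_def finite_beta[OF fin])
  then show ?thesis
    unfolding Q.card_pow_totatives_ord[OF X] .
qed

lemma elementary_p_group_quotient_center:
  assumes fin: "finite (carrier G)" and p: "Factorial_Ring.prime p"
    and index: "card (rcosets (center G)) = p ^ q"
    and cosets: "\<And>x. x \<in> carrier G - center G \<Longrightarrow> card (beta_cosets G x) = p - 1"
  shows "elementary_p_group (G Mod center G) p"
  unfolding elementary_p_group_def
proof (intro ballI impI)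
  interpret Q: group "G Mod center G"
    by (rule normal.factorgroup_is_group[OF normal_center])
  fix a assume a: "a \<in> carrier (G Mod center G)" and a1: "a \<noteq> \<one>\<^bsub>G Mod center G\<^esub>"
  then obtain x where x: "x \<in> carrier G" and ax: "a = center G #> x"
    by (auto simp: carrier_FactGroup)
  have "x \<notin> center G"
    using a1 ax subgroup.rcos_const[OF subgroup_center is_group] by auto
  then have "totient (Q.ord a) \<le> p - 1"
    using totient_ord_le_card_beta_cosets[OF fin x] cosets[of x] x ax by simp
  moreover have "Q.ord a dvd p ^ q"
    using Q.ord_dvd_group_order[OF a] index by (simp add: order_def FactGroup_def)
  moreover have "Q.ord a \<noteq> 1"
    using Q.ord_eq_1[OF a] a1 by simp
  ultimately show "Q.ord a = p"
    by (intro eq_prime_if_totient_le[OF p])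
qed

end

theorem proposition3p6:
  fixes G :: "('a, 'b) monoid_scheme" and p q :: nat
  assumes "group G" and "finite (carrier G)"
    and "induced_regular G"
    and "Factorial_Ring.prime p" and "Factorial_Ring.prime q"
    and "card (rcosets\<^bsub>G\<^esub> (center G)) = p ^ q"
  shows "elementary_p_group (G Mod (center G)) p \<and>
         (\<forall>x \<in> carrier G - center G. card (beta G x) = (p - 1) * card (center G))"
proof -
  interpret group G by fact
  have cosets: "card (beta_cosets G x) = p - 1" if "x \<in> carrier G - center G" for x
    using card_beta_cosets_eq_pred_prime[OF assms(2-6) that] .
  show ?thesis
  proof
    show "elementary_p_group (G Mod center G) p"
      using elementary_p_group_quotient_center[OF assms(2,4,6) cosets] .
    show "\<forall>x \<in> carrier G - center G. card (beta G x) = (p - 1) * card (center G)"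
      using card_beta[OF assms(2)] cosets by simp
  qed
qed

end
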